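(* Let $k$ be a field, $Q$ a finite connected quiver without oriented cycles with vertex set $Q_0$ and arrow set $Q_1$, let $m\geq 2$, and let $\Lambda=kQ/F^m$ be the $m$-truncated path algebra. Then $$\dim_k H^1(\Lambda,\Lambda)=1-|Q_0|+|Q_1/\!/B|,$$ where $B$ is the set of paths of $Q$ of length strictly less than $m$ (including vertices) and $Q_1/\!/B=\{(a,\varepsilon)\in Q_1\times B\mid s(\varepsilon)=s(a),\ t(\varepsilon)=t(a)\}$.
   Context: $kQ$ is the path algebra of $Q$; $F$ is the two-sided ideal generated by the arrows, so $F^m$ is the ideal generated by all paths of length $m$. $H^1(\Lambda,\Lambda)$ is the first Hochschild cohomology of $\Lambda$ (derivations modulo inner derivations). $s$ and $t$ denote source and target of arrows and paths. *)

theory Defs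
  imports Main "HOL.Vector_Spaces" "HOL-Library.Function_Algebras"
begin

text \<open>A path is a pair (v, as): the starting vertex v together with the list of arrows
  (read left to right).  The trivial path e_v is (v, []).\<close>

type_synonym ('v, 'a) path = "'v \<times> 'a list"

definition is_quiver :: "'v set \<Rightarrow> 'a set \<Rightarrow> ('a \<Rightarrow> 'v) \<Rightarrow> ('a \<Rightarrow> 'v) \<Rightarrow> bool" where
  "is_quiver V A s t \<longleftrightarrow> (\<forall>a\<in>A. s a \<in> V \<and> t a \<in> V)"

definition is_path :: "'v set \<Rightarrow> 'a set \<Rightarrow> ('a \<Rightarrow> 'v) \<Rightarrow> ('a \<Rightarrow> 'v) \<Rightarrow> ('v, 'a) path \<Rightarrow> bool" where
  "is_path V A s t p \<longleftrightarrow> fst p \<in> V \<and> set (snd p) \<subseteq> A \<and>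
     (snd p \<noteq> [] \<longrightarrow> s (hd (snd p)) = fst p) \<and>
     (\<forall>i. Suc i < length (snd p) \<longrightarrow> t (snd p ! i) = s (snd p ! Suc i))"

definition path_src :: "('v, 'a) path \<Rightarrow> 'v" where
  "path_src p = fst p"

definition path_tgt :: "('a \<Rightarrow> 'v) \<Rightarrow> ('v, 'a) path \<Rightarrow> 'v" where
  "path_tgt t p = (if snd p = [] then fst p else t (last (snd p)))"

definition path_len :: "('v, 'a) path \<Rightarrow> nat" where
  "path_len p = length (snd p)"

text \<open>Concatenation p q (first p, then q), meaningful when path_tgt t p = path_src q.\<close>
definition path_cat :: "('v, 'a) path \<Rightarrow> ('v, 'a) path \<Rightarrow> ('v, 'a) path" where
  "path_cat p q = (fst p, snd p @ snd q)"

definition finite_quiver :: "'v set \<Rightarrow> 'a set \<Rightarrow> bool" where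
  "finite_quiver V A \<longleftrightarrow> finite V \<and> finite A"

definition connected_quiver :: "'v set \<Rightarrow> 'a set \<Rightarrow> ('a \<Rightarrow> 'v) \<Rightarrow> ('a \<Rightarrow> 'v) \<Rightarrow> bool" where
  "connected_quiver V A s t \<longleftrightarrow> V \<noteq> {} \<and>
     (\<forall>u\<in>V. \<forall>v\<in>V. (u, v) \<in> ({(s a, t a) | a. a \<in> A} \<union> {(t a, s a) | a. a \<in> A})\<^sup>*)"

definition acyclic_quiver :: "'v set \<Rightarrow> 'a set \<Rightarrow> ('a \<Rightarrow> 'v) \<Rightarrow> ('a \<Rightarrow> 'v) \<Rightarrow> bool" where
  "acyclic_quiver V A s t \<longleftrightarrow>
     \<not> (\<exists>p. is_path V A s t p \<and> path_len p > 0 \<and> path_src p = path_tgt t p)"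

definition short_paths :: "'v set \<Rightarrow> 'a set \<Rightarrow> ('a \<Rightarrow> 'v) \<Rightarrow> ('a \<Rightarrow> 'v) \<Rightarrow> nat \<Rightarrow> ('v, 'a) path set" where
  "short_paths V A s t m = {p. is_path V A s t p \<and> path_len p < m}"

definition parallel_pairs :: "'v set \<Rightarrow> 'a set \<Rightarrow> ('a \<Rightarrow> 'v) \<Rightarrow> ('a \<Rightarrow> 'v) \<Rightarrow> nat \<Rightarrow> ('a \<times> ('v, 'a) path) set" where
  "parallel_pairs V A s t m = {(a, e). a \<in> A \<and> e \<in> short_paths V A s t m \<and>
       path_src e = s a \<and> path_tgt t e = t a}"

text \<open>Since the residue classes of the paths of
  length < m form a k-basis of kQ/F^m (F^m being spanned by the paths of length \<ge> m),
  \<Lambda> is realised as the k-vector space of coefficient functions on paths supported on B,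
  with the product induced by concatenation of paths (zero if not composable or if the
  concatenation has length \<ge> m, i.e. lies in F^m).\<close>
definition trunc_carrier :: "'v set \<Rightarrow> 'a set \<Rightarrow> ('a \<Rightarrow> 'v) \<Rightarrow> ('a \<Rightarrow> 'v) \<Rightarrow> nat \<Rightarrow> (('v, 'a) path \<Rightarrow> 'k::field) set" where
  "trunc_carrier V A s t m = {x. \<forall>p. p \<notin> short_paths V A s t m \<longrightarrow> x p = 0}"

definition trunc_mult :: "'v set \<Rightarrow> 'a set \<Rightarrow> ('a \<Rightarrow> 'v) \<Rightarrow> ('a \<Rightarrow> 'v) \<Rightarrow> nat \<Rightarrow>
    (('v, 'a) path \<Rightarrow> 'k::field) \<Rightarrow> (('v, 'a) path \<Rightarrow> 'k) \<Rightarrow> (('v, 'a) path \<Rightarrow> 'k)" where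
  "trunc_mult V A s t m x y r =
     (if r \<in> short_paths V A s t m then
        (\<Sum>(p, q) \<in> {(p, q). p \<in> short_paths V A s t m \<and> q \<in> short_paths V A s t m \<and>
                             path_tgt t p = path_src q \<and> path_cat p q = r}. x p * y q)
      else 0)"

text \<open>k-linear derivations \<Lambda> \<rightarrow> \<Lambda>.  Maps are normalised to be 0 outside \<Lambda> so that
  each derivation has a unique representative.\<close>
definition derivations :: "'v set \<Rightarrow> 'a set \<Rightarrow> ('a \<Rightarrow> 'v) \<Rightarrow> ('a \<Rightarrow> 'v) \<Rightarrow> nat \<Rightarrow>
    ((('v, 'a) path \<Rightarrow> 'k::field) \<Rightarrow> (('v, 'a) path \<Rightarrow> 'k)) set" where
  "derivations V A s t m = (let L = trunc_carrier V A s t m; mu = trunc_mult V A s t m in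
     {D. (\<forall>x. x \<notin> L \<longrightarrow> D x = 0) \<and> (\<forall>x\<in>L. D x \<in> L) \<and>
         (\<forall>x\<in>L. \<forall>y\<in>L. D (x + y) = D x + D y) \<and>
         (\<forall>c. \<forall>x\<in>L. D (\<lambda>p. c * x p) = (\<lambda>p. c * D x p)) \<and>
         (\<forall>x\<in>L. \<forall>y\<in>L. D (mu x y) = mu (D x) y + mu x (D y))})"

definition inner_derivations :: "'v set \<Rightarrow> 'a set \<Rightarrow> ('a \<Rightarrow> 'v) \<Rightarrow> ('a \<Rightarrow> 'v) \<Rightarrow> nat \<Rightarrow>
    ((('v, 'a) path \<Rightarrow> 'k::field) \<Rightarrow> (('v, 'a) path \<Rightarrow> 'k)) set" where
  "inner_derivations V A s t m = (let L = trunc_carrier V A s t m; mu = trunc_mult V A s t m in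
     {D. \<exists>a\<in>L. D = (\<lambda>x. if x \<in> L then mu a x - mu x a else 0)})"

definition map_scale :: "'k::field \<Rightarrow> (('p \<Rightarrow> 'k) \<Rightarrow> ('p \<Rightarrow> 'k)) \<Rightarrow> (('p \<Rightarrow> 'k) \<Rightarrow> ('p \<Rightarrow> 'k))" where
  "map_scale c D = (\<lambda>x p. c * D x p)"

definition kdim :: "((('p \<Rightarrow> 'k::field) \<Rightarrow> ('p \<Rightarrow> 'k)) set) \<Rightarrow> nat" where
  "kdim S = vector_space.dim map_scale S"

text \<open>dim_k H^1(\<Lambda>,\<Lambda>) = dim_k (Der / Inn) = dim_k Der - dim_k Inn
  (Inn \<subseteq> Der are finite-dimensional here).\<close>
definition HH1_dim :: "'v set \<Rightarrow> 'a set \<Rightarrow> ('a \<Rightarrow> 'v) \<Rightarrow> ('a \<Rightarrow> 'v) \<Rightarrow> nat \<Rightarrow> 'k::field itself \<Rightarrow> int" where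
  "HH1_dim V A s t m _ =
     int (kdim (derivations V A s t m :: ((('v, 'a) path \<Rightarrow> 'k) \<Rightarrow> _) set))
     - int (kdim (inner_derivations V A s t m :: ((('v, 'a) path \<Rightarrow> 'k) \<Rightarrow> _) set))"

end

theory Submission
  imports Defs
begin

text \<open>The classes of the paths in B form a basis of \<Lambda>, and the product of two of them is their
  concatenation or 0; so a derivation is determined by its values on the vertices and the arrows.
  Subtracting a suitable inner derivation makes a derivation D vanish on the vertices; then D maps
  each arrow a into the span of the paths \<epsilon> \<in> B parallel to a, and D agrees with the
  combination of the derivations D_(a,\<epsilon>), which replace one occurrence of a by \<epsilon>, having these
  coefficients. Together with the inner derivations ad p of the paths p \<in> B of positive length
  they form a basis of Der \<Lambda>, which therefore has dimension |Q_1//B| + |B| - |Q_0|. Since Q is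
  connected and has no oriented cycles, the centre of \<Lambda> is k\<cdot>1, so Inn \<Lambda> has dimension |B| - 1.\<close>

section \<open>Paths in a quiver\<close>

fun walk :: "('a \<Rightarrow> 'v) \<Rightarrow> ('a \<Rightarrow> 'v) \<Rightarrow> 'v \<Rightarrow> 'a list \<Rightarrow> bool" where
  "walk s t v [] \<longleftrightarrow> True"
| "walk s t v (a # as) \<longleftrightarrow> s a = v \<and> walk s t (t a) as"

lemma walk_iff_nth:
  "walk s t v as \<longleftrightarrow> (as \<noteq> [] \<longrightarrow> s (hd as) = v) \<and>
     (\<forall>i. Suc i < length as \<longrightarrow> t (as ! i) = s (as ! Suc i))"
proof (induction as arbitrary: v)
  case Nil
  then show ?case by simp
next
  case (Cons a as)
  have "(\<forall>i. Suc i < length (a # as) \<longrightarrow> t ((a # as) ! i) = s ((a # as) ! Suc i)) \<longleftrightarrow>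
        (as \<noteq> [] \<longrightarrow> t a = s (hd as)) \<and> (\<forall>i. Suc i < length as \<longrightarrow> t (as ! i) = s (as ! Suc i))"
    by (auto simp: hd_conv_nth nth_Cons' split: if_splits)
  then show ?case using Cons.IH[of "t a"] by auto
qed

lemma is_path_iff_walk:
  "is_path V A s t p \<longleftrightarrow> fst p \<in> V \<and> set (snd p) \<subseteq> A \<and> walk s t (fst p) (snd p)"
  unfolding is_path_def walk_iff_nth by auto

lemma walk_append:
  "walk s t v (xs @ ys) \<longleftrightarrow> walk s t v xs \<and> walk s t (path_tgt t (v, xs)) ys"
  by (induction xs arbitrary: v) (auto simp: path_tgt_def)

lemma is_path_cat:
  "is_path V A s t p \<Longrightarrow> is_path V A s t q \<Longrightarrow> path_tgt t p = fst q \<Longrightarrow>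
    is_path V A s t (path_cat p q)"
  by (auto simp: is_path_iff_walk path_cat_def walk_append)

lemma is_path_catD1: "is_path V A s t (path_cat p q) \<Longrightarrow> is_path V A s t p"
  by (auto simp: is_path_iff_walk path_cat_def walk_append)

lemma path_tgt_in_vertices: "is_quiver V A s t \<Longrightarrow> is_path V A s t p \<Longrightarrow> path_tgt t p \<in> V"
  by (auto simp: is_quiver_def is_path_iff_walk path_tgt_def intro!: last_in_set)

lemma is_path_catD2:
  assumes "is_quiver V A s t" and "is_path V A s t (path_cat p q)" and "path_tgt t p = fst q"
  shows "is_path V A s t q"
  using assms path_tgt_in_vertices[OF assms(1) is_path_catD1[OF assms(2)]]
  by (auto simp: is_path_iff_walk path_cat_def walk_append)

lemma connected_quiver_const:
  assumes "connected_quiver V A s t" and "\<And>b. b \<in> A \<Longrightarrow> f (s b) = f (t b)"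
    and "u \<in> V" and "v \<in> V"
  shows "f u = f v"
proof -
  have "(u, v) \<in> ({(s a, t a) | a. a \<in> A} \<union> {(t a, s a) | a. a \<in> A})\<^sup>*"
    using assms(1,3,4) by (auto simp: connected_quiver_def)
  then show ?thesis
    by (induction rule: rtrancl_induct) (auto simp: assms(2))
qed

definition path_prefix :: "('v, 'a) path \<Rightarrow> nat \<Rightarrow> ('v, 'a) path" where
  "path_prefix r i = (fst r, take i (snd r))"

definition path_suffix :: "('a \<Rightarrow> 'v) \<Rightarrow> ('v, 'a) path \<Rightarrow> nat \<Rightarrow> ('v, 'a) path" where
  "path_suffix t r i = (path_tgt t (path_prefix r i), drop i (snd r))"

lemma path_cat_assoc: "path_cat (path_cat p q) r = path_cat p (path_cat q r)"
  by (simp add: path_cat_def)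

lemma path_len_cat [simp]: "path_len (path_cat p q) = path_len p + path_len q"
  by (simp add: path_len_def path_cat_def)

lemma fst_path_cat [simp]: "fst (path_cat p q) = fst p"
  by (simp add: path_cat_def)

lemma path_tgt_cat: "path_tgt t p = fst q \<Longrightarrow> path_tgt t (path_cat p q) = path_tgt t q"
  by (auto simp: path_tgt_def path_cat_def)

lemma path_cat_prefix_suffix: "path_cat (path_prefix r i) (path_suffix t r i) = r"
  by (simp add: path_cat_def path_prefix_def path_suffix_def)

lemma path_tgt_suffix: "path_tgt t (path_suffix t r i) = path_tgt t r"
  by (auto simp: path_tgt_def path_suffix_def path_prefix_def)

lemma fst_path_suffix: "fst (path_suffix t r i) = path_tgt t (path_prefix r i)"
  by (simp add: path_suffix_def)

lemma fst_path_prefix [simp]: "fst (path_prefix r i) = fst r"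
  by (simp add: path_prefix_def)

lemma path_prefix_cat_left: "i \<le> path_len p \<Longrightarrow> path_prefix (path_cat p q) i = path_prefix p i"
  by (simp add: path_prefix_def path_cat_def path_len_def)

lemma path_prefix_cat_right: "path_prefix (path_cat p q) (path_len p + j) = path_cat p (path_prefix q j)"
  by (simp add: path_prefix_def path_cat_def path_len_def)

lemma path_suffix_cat_left:
  "i < path_len p \<Longrightarrow> path_suffix t (path_cat p q) (Suc i) = path_cat (path_suffix t p (Suc i)) q"
  by (simp add: path_suffix_def path_prefix_def path_cat_def path_len_def)

lemma path_suffix_cat_right:
  "j < path_len q \<Longrightarrow> path_suffix t (path_cat p q) (Suc (path_len p + j)) = path_suffix t q (Suc j)"
  by (auto simp: path_suffix_def path_prefix_def path_cat_def path_len_def path_tgt_def)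

lemma nth_path_cat_left: "i < path_len p \<Longrightarrow> snd (path_cat p q) ! i = snd p ! i"
  by (simp add: path_cat_def path_len_def nth_append)

lemma nth_path_cat_right: "snd (path_cat p q) ! (path_len p + j) = snd q ! j"
  by (simp add: path_cat_def path_len_def)

section \<open>Linear algebra\<close>

definition kscale :: "'k::field \<Rightarrow> ('p \<Rightarrow> 'k) \<Rightarrow> ('p \<Rightarrow> 'k)" where
  "kscale c x = (\<lambda>p. c * x p)"

lemma kscale_apply [simp]: "kscale c x p = c * x p"
  by (simp add: kscale_def)

lemma kscale_kscale [simp]: "kscale c (kscale d x) = kscale (c * d) x"
  by (rule ext) simp

lemma kscale_zero_right [simp]: "kscale c 0 = 0"
  by (rule ext) simp

lemma kscale_zero_left [simp]: "kscale 0 x = 0"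
  by (rule ext) simp

lemma kscale_add: "kscale c (x + y) = kscale c x + kscale c y"
  by (rule ext) (simp add: algebra_simps)

lemma kscale_diff: "kscale c (x - y) = kscale c x - kscale c y"
  by (rule ext) (simp add: algebra_simps)

lemma kscale_add_left: "kscale (c + d) x = kscale c x + kscale d x"
  by (rule ext) (simp add: ring_distribs)

lemma sum_apply: "(\<Sum>i\<in>I. f i) x = (\<Sum>i\<in>I. f i x)"
  by (induction I rule: infinite_finite_induct) auto

lemma sum_lessThan_add: "(\<Sum>i<k + n. f i) = (\<Sum>i<k. f i) + (\<Sum>j<n. f (k + j))" for n :: nat
  by (induction n) (simp_all add: add.assoc)

lemma kscale_sum: "kscale c (\<Sum>i\<in>I. f i) = (\<Sum>i\<in>I. kscale c (f i))"
  by (rule ext) (simp add: sum_apply sum_distrib_left)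

lemma map_scale_apply: "map_scale c D x = kscale c (D x)"
  by (simp add: map_scale_def kscale_def)

lemma (in vector_space) dim_eq_card_of_basis_family:
  assumes fin: "finite I" and indep: "\<And>c. (\<Sum>i\<in>I. c i *s g i) = 0 \<Longrightarrow> \<forall>i\<in>I. c i = 0"
    and sub: "g ` I \<subseteq> S" and spans: "S \<subseteq> span (g ` I)"
  shows "dim S = card I"
proof -
  have inj: "inj_on g I"
  proof (rule inj_onI, rule ccontr)
    fix i j assume i: "i \<in> I" and j: "j \<in> I" and eq: "g i = g j" and ne: "i \<noteq> j"
    define c :: "_ \<Rightarrow> 'a" where "c k = (if k = i then 1 else if k = j then - 1 else 0)" for k
    have "c k *s g k = (if k = i then g i else 0) + (if k = j then - g j else 0)" for k
      using ne by (auto simp: c_def)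
    then have "(\<Sum>k\<in>I. c k *s g k) = (\<Sum>k\<in>I. if k = i then g i else 0) + (\<Sum>k\<in>I. if k = j then - g j else 0)"
      by (simp add: sum.distrib)
    also have "\<dots> = 0" using i j fin eq by simp
    finally have "c i = 0" using indep i by blast
    then show False by (simp add: c_def)
  qed
  have "independent (g ` I)"
  proof (rule independent_if_scalars_zero)
    show "finite (g ` I)" using fin by simp
  next
    fix f x assume "(\<Sum>x\<in>g ` I. f x *s x) = 0" and x: "x \<in> g ` I"
    then have "(\<Sum>i\<in>I. f (g i) *s g i) = 0" by (simp add: sum.reindex[OF inj])
    then show "f x = 0" using indep[of "\<lambda>i. f (g i)"] x by auto
  qed
  then show ?thesis using basis_card_eq_dim[OF sub spans] card_image[OF inj] by simp
qed

interpretation map_space: vector_space "map_scale :: 'k::field \<Rightarrow> (('p \<Rightarrow> 'k) \<Rightarrow> ('p \<Rightarrow> 'k)) \<Rightarrow> _"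
  by unfold_locales (auto simp: map_scale_def fun_eq_iff algebra_simps)

section \<open>The truncated path algebra\<close>

locale truncated_path_algebra =
  fixes V :: "'v set" and A :: "'a set" and s t :: "'a \<Rightarrow> 'v" and m :: nat
  assumes quiver: "is_quiver V A s t" and finite_V: "finite V" and finite_A: "finite A"
    and two_le_m: "2 \<le> m"
begin

abbreviation "tgt \<equiv> path_tgt t"
abbreviation "B \<equiv> short_paths V A s t m"

lemma short_paths_iff: "p \<in> B \<longleftrightarrow> is_path V A s t p \<and> path_len p < m"
  by (simp add: short_paths_def)

lemma short_path_catD1: "path_cat p q \<in> B \<Longrightarrow> p \<in> B"
  by (auto simp: short_paths_iff dest: is_path_catD1)

lemma short_path_catD2: "path_cat p q \<in> B \<Longrightarrow> tgt p = fst q \<Longrightarrow> q \<in> B"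
  by (auto simp: short_paths_iff dest: is_path_catD2[OF quiver])

lemma finite_short_paths: "finite B"
proof (rule finite_subset)
  show "B \<subseteq> V \<times> {as. set as \<subseteq> A \<and> length as \<le> m}"
    by (auto simp: short_paths_iff is_path_iff_walk path_len_def)
  show "finite (V \<times> {as. set as \<subseteq> A \<and> length as \<le> m})"
    using finite_V finite_A by (intro finite_cartesian_product finite_lists_length_le)
qed

lemma short_path_prefix: "r \<in> B \<Longrightarrow> path_prefix r i \<in> B"
  using short_path_catD1[of "path_prefix r i" "path_suffix t r i"] by (simp add: path_cat_prefix_suffix)

lemma short_path_suffix: "r \<in> B \<Longrightarrow> path_suffix t r i \<in> B"
  using short_path_catD2[of "path_prefix r i" "path_suffix t r i"]
  by (simp add: path_cat_prefix_suffix fst_path_suffix)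

lemma vertex_short_path: "v \<in> V \<Longrightarrow> (v, []) \<in> B"
  using two_le_m by (auto simp: short_paths_iff is_path_iff_walk path_len_def)

lemma arrow_short_path: "b \<in> A \<Longrightarrow> (s b, [b]) \<in> B"
  using two_le_m quiver by (auto simp: short_paths_iff is_path_iff_walk path_len_def is_quiver_def)

lemma short_path_src: "p \<in> B \<Longrightarrow> fst p \<in> V"
  by (auto simp: short_paths_iff is_path_iff_walk)

lemma short_path_tgt: "p \<in> B \<Longrightarrow> tgt p \<in> V"
  by (auto simp: short_paths_iff intro: path_tgt_in_vertices[OF quiver])

lemma short_path_trivial: "p \<in> B \<Longrightarrow> path_len p = 0 \<Longrightarrow> p = (fst p, [])"
  by (cases p) (simp add: path_len_def)

definition positive_paths :: "('v, 'a) path set" where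
  "positive_paths = {p \<in> B. 0 < path_len p}"

lemma finite_positive_paths: "finite positive_paths"
  using finite_short_paths by (simp add: positive_paths_def)

lemma sum_short_paths_split:
  "(\<Sum>p\<in>B. f p) = (\<Sum>p\<in>positive_paths. f p) + (\<Sum>v\<in>V. f (v, []))"
proof -
  have "p \<in> (\<lambda>v. (v, [])) ` V" if "p \<in> B" and "path_len p = 0" for p
    using short_path_trivial[OF that] short_path_src[OF that(1)] by (metis image_eqI)
  then have split: "B = positive_paths \<union> (\<lambda>v. (v, [])) ` V"
    using vertex_short_path by (auto simp: positive_paths_def)
  have "positive_paths \<inter> (\<lambda>v. (v, [])) ` V = {}"
    by (auto simp: positive_paths_def path_len_def)
  then have "(\<Sum>p\<in>B. f p) = (\<Sum>p\<in>positive_paths. f p) + (\<Sum>p\<in>(\<lambda>v. (v, [])) ` V. f p)"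
    unfolding split using finite_positive_paths finite_V by (intro sum.union_disjoint) auto
  also have "(\<Sum>p\<in>(\<lambda>v. (v, [])) ` V. f p) = (\<Sum>v\<in>V. f (v, []))"
    by (subst sum.reindex) (auto simp: inj_on_def)
  finally show ?thesis .
qed

abbreviation \<Lambda> :: "(('v, 'a) path \<Rightarrow> 'k::field) set" where
  "\<Lambda> \<equiv> trunc_carrier V A s t m"

abbreviation mul :: "(('v, 'a) path \<Rightarrow> 'k::field) \<Rightarrow> (('v, 'a) path \<Rightarrow> 'k) \<Rightarrow> (('v, 'a) path \<Rightarrow> 'k)" where
  "mul \<equiv> trunc_mult V A s t m"

text \<open>The class in \<Lambda> = kQ/F^m of the path r; it is 0 if r has length at least m.\<close>

definition path_elem :: "('v, 'a) path \<Rightarrow> ('v, 'a) path \<Rightarrow> 'k::field" where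
  "path_elem r = (\<lambda>u. if u = r \<and> r \<in> B then 1 else 0)"

abbreviation vertex_elem :: "'v \<Rightarrow> ('v, 'a) path \<Rightarrow> 'k::field" where
  "vertex_elem v \<equiv> path_elem (v, [])"

abbreviation arrow_elem :: "'a \<Rightarrow> ('v, 'a) path \<Rightarrow> 'k::field" where
  "arrow_elem b \<equiv> path_elem (s b, [b])"

lemma carrier_iff: "x \<in> \<Lambda> \<longleftrightarrow> (\<forall>p. p \<notin> B \<longrightarrow> x p = 0)"
  by (simp add: trunc_carrier_def)

lemma carrier_vanishes: "x \<in> \<Lambda> \<Longrightarrow> p \<notin> B \<Longrightarrow> x p = 0"
  unfolding carrier_iff by blast

lemma path_elem_in_carrier [simp]: "path_elem r \<in> \<Lambda>"
  by (simp add: carrier_iff path_elem_def)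

lemma path_elem_not_short: "r \<notin> B \<Longrightarrow> path_elem r = 0"
  by (rule ext) (simp add: path_elem_def)

lemma zero_in_carrier [simp]: "0 \<in> \<Lambda>"
  by (simp add: carrier_iff)

lemma add_in_carrier [simp]: "x \<in> \<Lambda> \<Longrightarrow> y \<in> \<Lambda> \<Longrightarrow> x + y \<in> \<Lambda>"
  by (simp add: carrier_iff)

lemma diff_in_carrier [simp]: "x \<in> \<Lambda> \<Longrightarrow> y \<in> \<Lambda> \<Longrightarrow> x - y \<in> \<Lambda>"
  by (simp add: carrier_iff)

lemma kscale_in_carrier [simp]: "x \<in> \<Lambda> \<Longrightarrow> kscale c x \<in> \<Lambda>"
  by (simp add: carrier_iff)

lemma sum_in_carrier [simp]: "(\<And>i. i \<in> I \<Longrightarrow> f i \<in> \<Lambda>) \<Longrightarrow> (\<Sum>i\<in>I. f i) \<in> \<Lambda>"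
  by (induction I rule: infinite_finite_induct) auto

lemma mul_in_carrier [simp]: "mul x y \<in> \<Lambda>"
  by (simp add: carrier_iff trunc_mult_def)

lemma sum_path_elem_apply:
  assumes "S \<subseteq> B"
  shows "(\<Sum>p\<in>S. kscale (c p) (path_elem p)) r = (if r \<in> S then c r else 0)"
proof -
  have "(\<Sum>p\<in>S. kscale (c p) (path_elem p)) r = (\<Sum>p\<in>S. if p = r then c p else 0)"
    unfolding sum_apply using assms by (intro sum.cong) (auto simp: path_elem_def)
  then show ?thesis
    using assms finite_subset[OF assms finite_short_paths] by simp
qed

lemma carrier_expansion: "x \<in> \<Lambda> \<Longrightarrow> x = (\<Sum>p\<in>B. kscale (x p) (path_elem p))"
  by (rule ext) (simp add: sum_path_elem_apply carrier_vanishes)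

lemma mul_path_elem:
  "(mul (path_elem p) (path_elem q) :: _ \<Rightarrow> 'k::field) =
     (if tgt p = fst q then path_elem (path_cat p q) else 0)"
proof (rule ext)
  fix r
  let ?S = "{(p', q'). p' \<in> B \<and> q' \<in> B \<and> tgt p' = fst q' \<and> path_cat p' q' = r}"
  have "mul (path_elem p) (path_elem q) r = (if r \<in> B then \<Sum>pq\<in>?S. if pq = (p, q) then 1 else 0 else (0::'k))"
    unfolding trunc_mult_def path_src_def
    by (intro if_cong sum.cong refl) (auto simp: path_elem_def split: if_splits)
  also have "\<dots> = (if p \<in> B \<and> q \<in> B \<and> tgt p = fst q \<and> path_cat p q = r \<and> r \<in> B then 1 else 0)"
  proof -
    have "finite ?S"
      by (rule finite_subset[of _ "B \<times> B"]) (auto simp: finite_short_paths)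
    then show ?thesis by auto
  qed
  also have "\<dots> = (if tgt p = fst q then path_elem (path_cat p q) else 0) r"
    by (auto simp: path_elem_def dest: short_path_catD1 short_path_catD2)
  finally show "(mul (path_elem p) (path_elem q) r :: 'k) = (if tgt p = fst q then path_elem (path_cat p q) else 0) r" .
qed

lemma mul_add_left: "mul (x + y) z = mul x z + mul y z"
  by (rule ext) (simp add: trunc_mult_def ring_distribs sum.distrib split_beta)

lemma mul_add_right: "mul z (x + y) = mul z x + mul z y"
  by (rule ext) (simp add: trunc_mult_def ring_distribs sum.distrib split_beta)

lemma mul_diff_left: "mul (x - y) z = mul x z - mul y z"
  by (rule ext) (simp add: trunc_mult_def ring_distribs sum_subtractf split_beta)

lemma mul_diff_right: "mul z (x - y) = mul z x - mul z y"
  by (rule ext) (simp add: trunc_mult_def ring_distribs sum_subtractf split_beta)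

lemma mul_uminus_left: "mul (- x) y = - mul x y"
  by (rule ext) (simp add: trunc_mult_def sum_negf split_beta)

lemma mul_kscale_left: "mul (kscale c x) y = kscale c (mul x y)"
  by (rule ext) (simp add: trunc_mult_def sum_distrib_left split_beta mult.assoc)

lemma mul_kscale_right: "mul y (kscale c x) = kscale c (mul y x)"
  by (rule ext) (simp add: trunc_mult_def sum_distrib_left split_beta mult.left_commute)

lemma mul_zero_left [simp]: "mul 0 y = 0"
  by (rule ext) (simp add: trunc_mult_def)

lemma mul_zero_right [simp]: "mul y 0 = 0"
  by (rule ext) (simp add: trunc_mult_def)

lemma mul_sum_left: "mul (\<Sum>i\<in>I. f i) z = (\<Sum>i\<in>I. mul (f i) z)"
proof (induction I rule: infinite_finite_induct)
  case (infinite I)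
  then show ?case by (simp only: sum.infinite[OF infinite] mul_zero_left)
next
  case empty
  then show ?case by (simp only: sum.empty mul_zero_left)
next
  case (insert i I)
  then show ?case by (simp only: sum.insert[OF insert.hyps] mul_add_left insert.IH)
qed

lemma mul_sum_right: "mul z (\<Sum>i\<in>I. f i) = (\<Sum>i\<in>I. mul z (f i))"
proof (induction I rule: infinite_finite_induct)
  case (infinite I)
  then show ?case by (simp only: sum.infinite[OF infinite] mul_zero_right)
next
  case empty
  then show ?case by (simp only: sum.empty mul_zero_right)
next
  case (insert i I)
  then show ?case by (simp only: sum.insert[OF insert.hyps] mul_add_right insert.IH)
qed

lemma mul_expansion_left:
  assumes "x \<in> \<Lambda>"
  shows "mul x y = (\<Sum>p\<in>B. kscale (x p) (mul (path_elem p) y))"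
proof -
  have "mul x y = mul (\<Sum>p\<in>B. kscale (x p) (path_elem p)) y"
    using carrier_expansion[OF assms] by (rule arg_cong)
  then show ?thesis by (simp add: mul_sum_left mul_kscale_left)
qed

lemma mul_expansion_right:
  assumes "y \<in> \<Lambda>"
  shows "mul x y = (\<Sum>q\<in>B. kscale (y q) (mul x (path_elem q)))"
proof -
  have "mul x y = mul x (\<Sum>q\<in>B. kscale (y q) (path_elem q))"
    using carrier_expansion[OF assms] by (rule arg_cong)
  then show ?thesis by (simp add: mul_sum_right mul_kscale_right)
qed

lemma mul_assoc:
  assumes "x \<in> \<Lambda>" and "y \<in> \<Lambda>" and "z \<in> \<Lambda>"
  shows "mul (mul x y) z = mul x (mul y z)"
proof -
  have path_elem_assoc: "mul (mul (path_elem p) (path_elem q)) (path_elem r) =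
      mul (path_elem p) (mul (path_elem q) (path_elem r))" for p q r :: "('v, 'a) path"
    by (simp add: mul_path_elem path_tgt_cat path_cat_assoc)
  have "mul (mul (\<Sum>p\<in>B. kscale (x p) (path_elem p)) (\<Sum>q\<in>B. kscale (y q) (path_elem q)))
          (\<Sum>r\<in>B. kscale (z r) (path_elem r)) =
        mul (\<Sum>p\<in>B. kscale (x p) (path_elem p))
          (mul (\<Sum>q\<in>B. kscale (y q) (path_elem q)) (\<Sum>r\<in>B. kscale (z r) (path_elem r)))"
    by (simp add: mul_sum_left mul_sum_right mul_kscale_left mul_kscale_right kscale_sum
        path_elem_assoc mult.assoc)
  then show ?thesis
    using carrier_expansion[OF assms(1)] carrier_expansion[OF assms(2)] carrier_expansion[OF assms(3)]
    by metis
qed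

lemma mul_vertex_path_elem:
  "mul (vertex_elem v) (path_elem q) = (if v = fst q then path_elem q else 0)"
  by (simp add: mul_path_elem path_tgt_def path_cat_def)

lemma mul_path_elem_vertex:
  "mul (path_elem q) (vertex_elem w) = (if tgt q = w then path_elem q else 0)"
  by (simp add: mul_path_elem path_cat_def)

lemma mul_path_elem_cases: "mul (path_elem p) (path_elem q) \<in> {0, path_elem (path_cat p q)}"
  by (simp add: mul_path_elem)

lemma mul_path_elem_right_cases:
  "x \<in> {0, path_elem p} \<Longrightarrow> mul x (path_elem q) \<in> {0, path_elem (path_cat p q)}"
  by (auto simp: mul_path_elem)

lemma mul_path_elem_left_cases:
  "y \<in> {0, path_elem q} \<Longrightarrow> mul (path_elem p) y \<in> {0, path_elem (path_cat p q)}"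
  by (auto simp: mul_path_elem)

lemma mul_vertex_left:
  assumes "y \<in> \<Lambda>"
  shows "mul (vertex_elem v) y = (\<lambda>r. if fst r = v then y r else 0)"
proof (rule ext)
  fix r
  have "mul (vertex_elem v) y r = (\<Sum>q\<in>B. if q = r then (if fst r = v then y r else 0) else 0)"
    unfolding mul_expansion_right[OF assms] sum_apply mul_vertex_path_elem
    by (intro sum.cong refl) (auto simp: path_elem_def)
  then show "mul (vertex_elem v) y r = (if fst r = v then y r else 0)"
    using assms finite_short_paths by (auto simp: carrier_vanishes)
qed

lemma mul_vertex_right:
  assumes "y \<in> \<Lambda>"
  shows "mul y (vertex_elem w) = (\<lambda>r. if tgt r = w then y r else 0)"
proof (rule ext)
  fix r
  have "mul y (vertex_elem w) r = (\<Sum>q\<in>B. if q = r then (if tgt r = w then y r else 0) else 0)"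
    unfolding mul_expansion_left[OF assms] sum_apply mul_path_elem_vertex
    by (intro sum.cong refl) (auto simp: path_elem_def)
  then show "mul y (vertex_elem w) r = (if tgt r = w then y r else 0)"
    using assms finite_short_paths by (auto simp: carrier_vanishes)
qed

lemma coeff_mul_path_elem_right:
  assumes "x \<in> \<Lambda>" and "path_cat p q \<in> B" and "tgt p = fst q"
  shows "mul x (path_elem q) (path_cat p q) = x p"
proof -
  have "mul x (path_elem q) (path_cat p q) = (\<Sum>p'\<in>B. if p' = p then x p' else 0)"
    unfolding mul_expansion_left[OF assms(1)] sum_apply mul_path_elem using assms(2,3)
    by (intro sum.cong refl) (auto simp: path_elem_def path_cat_def)
  then show ?thesis
    using short_path_catD1[OF assms(2)] finite_short_paths by simp
qed

lemma coeff_mul_path_elem_left: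
  assumes "y \<in> \<Lambda>" and "path_cat p q \<in> B" and "tgt p = fst q"
  shows "mul (path_elem p) y (path_cat p q) = y q"
proof -
  have "mul (path_elem p) y (path_cat p q) = (\<Sum>q'\<in>B. if q' = q then y q' else 0)"
    unfolding mul_expansion_right[OF assms(1)] sum_apply mul_path_elem using assms(2,3)
    by (intro sum.cong refl) (auto simp: path_elem_def path_cat_def prod_eq_iff)
  then show ?thesis
    using short_path_catD2[OF assms(2,3)] finite_short_paths by simp
qed

definition one_elem :: "('v, 'a) path \<Rightarrow> 'k::field" where
  "one_elem = (\<Sum>v\<in>V. vertex_elem v)"

lemma one_elem_in_carrier [simp]: "one_elem \<in> \<Lambda>"
  by (simp add: one_elem_def)

lemma mul_one_left:
  assumes "y \<in> \<Lambda>"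
  shows "mul one_elem y = y"
proof (rule ext)
  fix r
  have "mul one_elem y r = (\<Sum>v\<in>V. if fst r = v then y r else 0)"
    using assms by (simp add: one_elem_def mul_sum_left mul_vertex_left sum_apply)
  then show "mul one_elem y r = y r"
    using finite_V short_path_src[of r] carrier_vanishes[OF assms, of r] by auto
qed

lemma mul_one_right:
  assumes "y \<in> \<Lambda>"
  shows "mul y one_elem = y"
proof (rule ext)
  fix r
  have "mul y one_elem r = (\<Sum>v\<in>V. if tgt r = v then y r else 0)"
    using assms by (simp add: one_elem_def mul_sum_right mul_vertex_right sum_apply)
  then show "mul y one_elem r = y r"
    using finite_V short_path_tgt[of r] carrier_vanishes[OF assms, of r] by auto
qed

section \<open>Derivations\<close>

definition lin_endo :: "((('v, 'a) path \<Rightarrow> 'k::field) \<Rightarrow> (('v, 'a) path \<Rightarrow> 'k)) \<Rightarrow> bool" where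
  "lin_endo D \<longleftrightarrow> (\<forall>x. x \<notin> \<Lambda> \<longrightarrow> D x = 0) \<and> (\<forall>x\<in>\<Lambda>. D x \<in> \<Lambda>) \<and>
     (\<forall>x\<in>\<Lambda>. \<forall>y\<in>\<Lambda>. D (x + y) = D x + D y) \<and> (\<forall>c. \<forall>x\<in>\<Lambda>. D (kscale c x) = kscale c (D x))"

abbreviation Der :: "((('v, 'a) path \<Rightarrow> 'k::field) \<Rightarrow> (('v, 'a) path \<Rightarrow> 'k)) set" where
  "Der \<equiv> derivations V A s t m"

lemma derivations_iff:
  "D \<in> Der \<longleftrightarrow> lin_endo D \<and> (\<forall>x\<in>\<Lambda>. \<forall>y\<in>\<Lambda>. D (mul x y) = mul (D x) y + mul x (D y))"
  unfolding derivations_def Let_def lin_endo_def kscale_def by auto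

lemma derivation_Leibniz:
  "D \<in> Der \<Longrightarrow> x \<in> \<Lambda> \<Longrightarrow> y \<in> \<Lambda> \<Longrightarrow> D (mul x y) = mul (D x) y + mul x (D y)"
  by (simp add: derivations_iff)

lemma lin_endoD:
  assumes "lin_endo D"
  shows "x \<notin> \<Lambda> \<Longrightarrow> D x = 0" and "x \<in> \<Lambda> \<Longrightarrow> D x \<in> \<Lambda>"
    and "x \<in> \<Lambda> \<Longrightarrow> y \<in> \<Lambda> \<Longrightarrow> D (x + y) = D x + D y"
    and "x \<in> \<Lambda> \<Longrightarrow> D (kscale c x) = kscale c (D x)"
  using assms unfolding lin_endo_def by auto

lemma lin_endo_zero: "lin_endo D \<Longrightarrow> D 0 = 0"
  using lin_endoD(4)[of D 0 0] by simp

lemma lin_endo_sum: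
  assumes D: "lin_endo D"
  shows "(\<And>i. i \<in> I \<Longrightarrow> f i \<in> \<Lambda>) \<Longrightarrow> D (\<Sum>i\<in>I. f i) = (\<Sum>i\<in>I. D (f i))"
proof (induction I rule: infinite_finite_induct)
  case (infinite I)
  then show ?case by (simp only: sum.infinite[OF infinite.hyps] lin_endo_zero[OF D])
next
  case empty
  then show ?case by (simp only: sum.empty lin_endo_zero[OF D])
next
  case (insert i I)
  then have "D (f i + sum f I) = D (f i) + D (sum f I)"
    by (intro lin_endoD(3)[OF D]) auto
  then show ?case using insert by (simp only: sum.insert[OF insert.hyps]) auto
qed

lemma lin_endo_expansion:
  assumes D: "lin_endo D" and x: "x \<in> \<Lambda>"
  shows "D x = (\<Sum>p\<in>B. kscale (x p) (D (path_elem p)))"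
proof -
  have "D x = D (\<Sum>p\<in>B. kscale (x p) (path_elem p))"
    using carrier_expansion[OF x] by (rule arg_cong)
  also have "\<dots> = (\<Sum>p\<in>B. kscale (x p) (D (path_elem p)))"
    by (simp add: lin_endo_sum[OF D] lin_endoD(4)[OF D])
  finally show ?thesis .
qed

lemma lin_endo_eq_0I:
  assumes lin: "lin_endo D" and paths: "\<And>r. r \<in> B \<Longrightarrow> D (path_elem r) = 0"
  shows "D = 0"
proof (rule ext)
  fix x
  show "D x = 0 x"
  proof (cases "x \<in> \<Lambda>")
    case True
    then show ?thesis
      unfolding lin_endo_expansion[OF lin True] by (auto intro!: sum.neutral simp: paths)
  qed (simp add: lin_endoD(1)[OF lin])
qed

lemma lin_endo_add: "lin_endo D1 \<Longrightarrow> lin_endo D2 \<Longrightarrow> lin_endo (D1 + D2)"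
  unfolding lin_endo_def by (simp add: kscale_add algebra_simps)

lemma lin_endo_diff: "lin_endo D1 \<Longrightarrow> lin_endo D2 \<Longrightarrow> lin_endo (D1 - D2)"
  unfolding lin_endo_def by (simp add: kscale_diff algebra_simps)

lemma lin_endo_map_scale: "lin_endo D \<Longrightarrow> lin_endo (map_scale c D)"
  unfolding lin_endo_def by (simp add: map_scale_apply kscale_add mult.commute)

lemma derivations_add: "D1 \<in> Der \<Longrightarrow> D2 \<in> Der \<Longrightarrow> D1 + D2 \<in> Der"
  unfolding derivations_iff by (simp add: lin_endo_add mul_add_left mul_add_right lin_endoD)

lemma derivations_diff: "D1 \<in> Der \<Longrightarrow> D2 \<in> Der \<Longrightarrow> D1 - D2 \<in> Der"
  unfolding derivations_iff by (simp add: lin_endo_diff mul_diff_left mul_diff_right lin_endoD)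

lemma derivations_map_scale: "D \<in> Der \<Longrightarrow> map_scale c D \<in> Der"
  unfolding derivations_iff
  by (simp add: lin_endo_map_scale map_scale_apply mul_kscale_left mul_kscale_right kscale_add)

lemma derivations_zero: "0 \<in> Der"
  unfolding derivations_iff lin_endo_def by simp

lemma derivations_sum: "(\<And>i. i \<in> I \<Longrightarrow> F i \<in> Der) \<Longrightarrow> (\<Sum>i\<in>I. F i) \<in> Der"
  by (induction I rule: infinite_finite_induct) (simp_all add: derivations_zero derivations_add)

lemma derivation_if_Leibniz_on_paths:
  assumes D: "lin_endo (D :: (('v, 'a) path \<Rightarrow> 'k::field) \<Rightarrow> _)"
    and Leibniz: "\<And>p q. p \<in> B \<Longrightarrow> q \<in> B \<Longrightarrow>
      D (mul (path_elem p) (path_elem q)) = mul (D (path_elem p)) (path_elem q) + mul (path_elem p) (D (path_elem q))"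
  shows "D \<in> Der"
  unfolding derivations_iff
proof (intro conjI D ballI)
  fix x y :: "('v, 'a) path \<Rightarrow> 'k" assume x: "x \<in> \<Lambda>" and y: "y \<in> \<Lambda>"
  have "D (mul x y) = D (\<Sum>p\<in>B. \<Sum>q\<in>B. kscale (x p * y q) (mul (path_elem p) (path_elem q)))"
    using x y by (simp add: mul_expansion_left[of x] mul_expansion_right[of y] mul_kscale_right
        kscale_sum mult.commute) (rule arg_cong[of _ _ D], rule sum.swap)
  also have "\<dots> = (\<Sum>p\<in>B. \<Sum>q\<in>B. kscale (x p * y q) (D (mul (path_elem p) (path_elem q))))"
    by (simp add: lin_endo_sum[OF D] lin_endoD(4)[OF D])
  also have "\<dots> = (\<Sum>p\<in>B. \<Sum>q\<in>B. kscale (x p * y q) (mul (D (path_elem p)) (path_elem q)) +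
      kscale (x p * y q) (mul (path_elem p) (D (path_elem q))))"
    by (intro sum.cong refl) (simp add: Leibniz kscale_add)
  also have "\<dots> = mul (\<Sum>p\<in>B. kscale (x p) (D (path_elem p))) (\<Sum>q\<in>B. kscale (y q) (path_elem q)) +
      mul (\<Sum>p\<in>B. kscale (x p) (path_elem p)) (\<Sum>q\<in>B. kscale (y q) (D (path_elem q)))"
    by (simp add: sum.distrib mul_sum_left mul_sum_right mul_kscale_left mul_kscale_right kscale_sum
        mult.commute) (intro arg_cong2[where f="(+)"] sum.swap)
  also have "\<dots> = mul (D x) y + mul x (D y)"
    using carrier_expansion[OF x] carrier_expansion[OF y] lin_endo_expansion[OF D x]
      lin_endo_expansion[OF D y] by metis
  finally show "D (mul x y) = mul (D x) y + mul x (D y)" .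
qed

definition ad :: "(('v, 'a) path \<Rightarrow> 'k::field) \<Rightarrow> (('v, 'a) path \<Rightarrow> 'k) \<Rightarrow> (('v, 'a) path \<Rightarrow> 'k)" where
  "ad z = (\<lambda>x. if x \<in> \<Lambda> then mul z x - mul x z else 0)"

lemma inner_derivations_eq: "inner_derivations V A s t m = ad ` \<Lambda>"
  unfolding inner_derivations_def Let_def ad_def by auto

lemma ad_in_derivations:
  assumes z: "(z :: ('v, 'a) path \<Rightarrow> 'k::field) \<in> \<Lambda>"
  shows "ad z \<in> Der"
  unfolding derivations_iff
proof (intro conjI ballI)
  show "lin_endo (ad z)"
    unfolding lin_endo_def ad_def
    by (simp add: mul_add_left mul_add_right mul_kscale_left mul_kscale_right kscale_diff)
  fix x y :: "('v, 'a) path \<Rightarrow> 'k" assume x: "x \<in> \<Lambda>" and y: "y \<in> \<Lambda>"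
  have "mul (mul z x) y - mul (mul x z) y + (mul x (mul z y) - mul x (mul y z)) =
        mul z (mul x y) - mul (mul x y) z"
    using mul_assoc[OF z x y] mul_assoc[OF x z y] mul_assoc[OF x y z] by simp
  then show "ad z (mul x y) = mul (ad z x) y + mul x (ad z y)"
    using x y by (simp add: ad_def mul_diff_left mul_diff_right)
qed

lemma ad_add: "ad (z1 + z2) = ad z1 + ad z2"
  by (rule ext) (simp add: ad_def mul_add_left mul_add_right)

lemma ad_diff: "ad (z1 - z2) = ad z1 - ad z2"
  by (rule ext) (simp add: ad_def mul_diff_left mul_diff_right)

lemma ad_kscale: "ad (kscale c z) = map_scale c (ad z)"
  by (rule ext) (simp add: ad_def mul_kscale_left mul_kscale_right map_scale_apply kscale_diff)

lemma ad_zero: "ad 0 = 0"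
  by (rule ext) (simp add: ad_def)

lemma ad_sum: "ad (\<Sum>i\<in>I. f i) = (\<Sum>i\<in>I. ad (f i))"
proof (induction I rule: infinite_finite_induct)
  case (infinite I)
  then show ?case by (simp only: sum.infinite[OF infinite] ad_zero)
next
  case empty
  then show ?case by (simp only: sum.empty ad_zero)
next
  case (insert i I)
  then show ?case by (simp only: sum.insert[OF insert.hyps] ad_add insert.IH)
qed

lemma ad_one: "ad one_elem = 0"
  by (rule ext) (simp add: ad_def mul_one_left mul_one_right)

lemma ad_vertex:
  assumes "z \<in> \<Lambda>"
  shows "ad z (vertex_elem w) = (\<lambda>r. (if tgt r = w then z r else 0) - (if fst r = w then z r else 0))"
  by (rule ext) (simp add: ad_def mul_vertex_left[OF assms] mul_vertex_right[OF assms])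

lemma ad_vertex_combination_at_vertex:
  "ad (\<Sum>v\<in>V. kscale (c v) (vertex_elem v)) (vertex_elem w) = (0 :: ('v, 'a) path \<Rightarrow> 'k::field)"
proof -
  have "mul (\<Sum>v\<in>V. kscale (c v) (vertex_elem v)) (vertex_elem w) =
      (\<Sum>v\<in>V. if v = w then kscale (c v) (vertex_elem v) else (0 :: ('v, 'a) path \<Rightarrow> 'k))"
    by (simp add: mul_sum_left mul_kscale_left mul_vertex_path_elem) (intro sum.cong refl, auto)
  moreover have "mul (vertex_elem w) (\<Sum>v\<in>V. kscale (c v) (vertex_elem v)) =
      (\<Sum>v\<in>V. if v = w then kscale (c v) (vertex_elem v) else (0 :: ('v, 'a) path \<Rightarrow> 'k))"
    by (simp add: mul_sum_right mul_kscale_right mul_vertex_path_elem) (intro sum.cong refl, auto)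
  ultimately show ?thesis by (simp add: ad_def)
qed

lemma center_vertex_coeffs_eq:
  assumes conn: "connected_quiver V A s t" and z: "z \<in> \<Lambda>" and central: "ad z = 0"
    and u: "u \<in> V" and v: "v \<in> V"
  shows "z (u, []) = z (v, [])"
proof (rule connected_quiver_const[OF conn _ u v, where f = "\<lambda>w. z (w, [])"])
  fix b assume b: "b \<in> A"
  have "path_cat (s b, []) (s b, [b]) = (s b, [b])" and "path_cat (s b, [b]) (t b, []) = (s b, [b])"
    by (simp_all add: path_cat_def)
  then have "mul z (arrow_elem b) (s b, [b]) = z (s b, [])" and "mul (arrow_elem b) z (s b, [b]) = z (t b, [])"
    using coeff_mul_path_elem_right[OF z, of "(s b, [])" "(s b, [b])"]
      coeff_mul_path_elem_left[OF z, of "(s b, [b])" "(t b, [])"] arrow_short_path[OF b]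
    by (simp_all add: path_tgt_def)
  moreover have "ad z (arrow_elem b) (s b, [b]) = 0"
    using central by simp
  ultimately show "z (s b, []) = z (t b, [])"
    by (simp add: ad_def)
qed

text \<open>arrow_der a e is the derivation D_(a,\<epsilon>) of the paper: it maps a path to the sum of the paths
  obtained by replacing one occurrence of a by e.\<close>

definition arrow_subst :: "'a \<Rightarrow> ('v, 'a) path \<Rightarrow> ('v, 'a) path \<Rightarrow> ('v, 'a) path \<Rightarrow> 'k::field" where
  "arrow_subst a e p = (\<Sum>i<path_len p. if snd p ! i = a then
     mul (mul (path_elem (path_prefix p i)) (path_elem e)) (path_elem (path_suffix t p (Suc i))) else 0)"

definition arrow_der :: "'a \<Rightarrow> ('v, 'a) path \<Rightarrow> (('v, 'a) path \<Rightarrow> 'k::field) \<Rightarrow> (('v, 'a) path \<Rightarrow> 'k)" where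
  "arrow_der a e = (\<lambda>x. if x \<in> \<Lambda> then \<Sum>p\<in>B. kscale (x p) (arrow_subst a e p) else 0)"

lemma arrow_subst_in_carrier [simp]: "arrow_subst a e p \<in> \<Lambda>"
  by (simp add: arrow_subst_def)

lemma lin_endo_arrow_der: "lin_endo (arrow_der a e)"
  unfolding lin_endo_def arrow_der_def by (simp add: sum.distrib kscale_add_left kscale_sum)

lemma arrow_der_path_elem: "arrow_der a e (path_elem r) = (if r \<in> B then arrow_subst a e r else 0)"
proof -
  have "(\<Sum>p\<in>B. kscale (path_elem r p) (arrow_subst a e p)) = (\<Sum>p\<in>B. if p = r then arrow_subst a e r else 0)"
    by (intro sum.cong refl) (auto simp: path_elem_def)
  then show ?thesis by (simp add: arrow_der_def finite_short_paths)
qed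

lemma arrow_der_vertex: "v \<in> V \<Longrightarrow> arrow_der a e (vertex_elem v) = 0"
  using vertex_short_path by (simp add: arrow_der_path_elem arrow_subst_def path_len_def)

lemma arrow_der_arrow:
  assumes "b \<in> A" and "fst e = s a" and "tgt e = t a"
  shows "arrow_der a e (arrow_elem b) = (if b = a then path_elem e else 0)"
proof -
  have "arrow_der a e (arrow_elem b) = arrow_subst a e (s b, [b])"
    using arrow_short_path[OF assms(1)] by (simp add: arrow_der_path_elem)
  also have "\<dots> = (if b = a then mul (mul (vertex_elem (s b)) (path_elem e)) (vertex_elem (t b)) else 0)"
    by (simp add: arrow_subst_def path_len_def path_prefix_def path_suffix_def path_tgt_def)
  also have "\<dots> = (if b = a then path_elem e else 0)"
    using assms(2,3) by (simp add: mul_vertex_path_elem mul_path_elem_vertex)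
  finally show ?thesis .
qed

lemma arrow_subst_long:
  assumes e: "snd e \<noteq> []" and long: "m \<le> path_len p + path_len q"
  shows "mul (arrow_subst a e p) (path_elem q) = (0 :: ('v, 'a) path \<Rightarrow> 'k::field)"
    and "mul (path_elem p) (arrow_subst a e q) = (0 :: ('v, 'a) path \<Rightarrow> 'k)"
proof -
  have vanish: "x = 0" if "x \<in> {0, path_elem r}" and "m \<le> path_len r"
    for x :: "('v, 'a) path \<Rightarrow> 'k" and r
    using that by (auto simp: path_elem_not_short short_paths_iff)
  have e_len: "1 \<le> path_len e" using e by (simp add: path_len_def Suc_le_eq)
  have "mul (mul (mul (path_elem (path_prefix p i)) (path_elem e)) (path_elem (path_suffix t p (Suc i))))
      (path_elem q) = (0 :: ('v, 'a) path \<Rightarrow> 'k)" if "i < path_len p" for i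
  proof (rule vanish)
    show "m \<le> path_len (path_cat (path_cat (path_cat (path_prefix p i) e) (path_suffix t p (Suc i))) q)"
      using that long e_len by (simp add: path_prefix_def path_suffix_def path_len_def path_cat_def)
  qed (intro mul_path_elem_right_cases mul_path_elem_cases)
  then show "mul (arrow_subst a e p) (path_elem q) = (0 :: ('v, 'a) path \<Rightarrow> 'k)"
    unfolding arrow_subst_def mul_sum_left by (intro sum.neutral) simp
  have "mul (path_elem p) (mul (mul (path_elem (path_prefix q i)) (path_elem e))
      (path_elem (path_suffix t q (Suc i)))) = (0 :: ('v, 'a) path \<Rightarrow> 'k)" if "i < path_len q" for i
  proof (rule vanish)
    show "m \<le> path_len (path_cat p (path_cat (path_cat (path_prefix q i) e) (path_suffix t q (Suc i))))"
      using that long e_len by (simp add: path_prefix_def path_suffix_def path_len_def path_cat_def)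
  qed (intro mul_path_elem_left_cases mul_path_elem_right_cases mul_path_elem_cases)
  then show "mul (path_elem p) (arrow_subst a e q) = (0 :: ('v, 'a) path \<Rightarrow> 'k)"
    unfolding arrow_subst_def mul_sum_right by (intro sum.neutral) simp
qed

lemma arrow_subst_cat:
  assumes pq: "tgt p = fst q"
  shows "(arrow_subst a e (path_cat p q) :: ('v, 'a) path \<Rightarrow> 'k::field) =
    mul (arrow_subst a e p) (path_elem q) + mul (path_elem p) (arrow_subst a e q)"
proof -
  let ?term = "\<lambda>r i. if snd r ! i = a then mul (mul (path_elem (path_prefix r i)) (path_elem e))
     (path_elem (path_suffix t r (Suc i))) else (0 :: ('v, 'a) path \<Rightarrow> 'k)"
  have "arrow_subst a e (path_cat p q) =
      (\<Sum>i<path_len p. ?term (path_cat p q) i) + (\<Sum>j<path_len q. ?term (path_cat p q) (path_len p + j))"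
    unfolding arrow_subst_def path_len_cat by (rule sum_lessThan_add)
  moreover have "?term (path_cat p q) i = mul (?term p i) (path_elem q)" if "i < path_len p" for i
  proof -
    have "path_elem (path_suffix t (path_cat p q) (Suc i)) =
        (mul (path_elem (path_suffix t p (Suc i))) (path_elem q) :: _ \<Rightarrow> 'k)"
      using pq that by (simp add: path_suffix_cat_left mul_path_elem path_tgt_suffix)
    then show ?thesis
      using that by (simp add: nth_path_cat_left path_prefix_cat_left mul_assoc)
  qed
  moreover have "?term (path_cat p q) (path_len p + j) = mul (path_elem p) (?term q j)" if "j < path_len q" for j
  proof -
    have "path_elem (path_prefix (path_cat p q) (path_len p + j)) =
        (mul (path_elem p) (path_elem (path_prefix q j)) :: _ \<Rightarrow> 'k)"
      using pq by (simp add: path_prefix_cat_right mul_path_elem)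
    then show ?thesis
      using that by (simp add: nth_path_cat_right path_suffix_cat_right mul_assoc)
  qed
  ultimately show ?thesis
    by (simp add: arrow_subst_def mul_sum_left mul_sum_right)
qed

lemma arrow_subst_not_composable:
  assumes pq: "tgt p \<noteq> fst q"
  shows "mul (arrow_subst a e p) (path_elem q) = (0 :: ('v, 'a) path \<Rightarrow> 'k::field)"
    and "mul (path_elem p) (arrow_subst a e q) = (0 :: ('v, 'a) path \<Rightarrow> 'k)"
proof -
  have "mul (mul (mul (path_elem (path_prefix p i)) (path_elem e)) (path_elem (path_suffix t p (Suc i))))
      (path_elem q) = (0 :: ('v, 'a) path \<Rightarrow> 'k)" for i
    using pq by (simp add: mul_assoc mul_path_elem path_tgt_suffix)
  then show "mul (arrow_subst a e p) (path_elem q) = (0 :: ('v, 'a) path \<Rightarrow> 'k)"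
    unfolding arrow_subst_def mul_sum_left by (intro sum.neutral) simp
  have "mul (path_elem p) (mul (mul (path_elem (path_prefix q i)) (path_elem e))
      (path_elem (path_suffix t q (Suc i)))) = (0 :: ('v, 'a) path \<Rightarrow> 'k)" for i
    using pq by (simp add: mul_assoc[symmetric] mul_path_elem)
  then show "mul (path_elem p) (arrow_subst a e q) = (0 :: ('v, 'a) path \<Rightarrow> 'k)"
    unfolding arrow_subst_def mul_sum_right by (intro sum.neutral) simp
qed

lemma arrow_der_in_derivations:
  assumes e: "snd e \<noteq> []"
  shows "(arrow_der a e :: (('v, 'a) path \<Rightarrow> 'k::field) \<Rightarrow> _) \<in> Der"
proof (rule derivation_if_Leibniz_on_paths[OF lin_endo_arrow_der])
  fix p q assume p: "p \<in> B" and q: "q \<in> B"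
  consider (not_composable) "tgt p \<noteq> fst q" | (short) "tgt p = fst q" "path_cat p q \<in> B"
    | (long) "tgt p = fst q" "m \<le> path_len p + path_len q"
    using p q by (cases "tgt p = fst q"; cases "m \<le> path_len p + path_len q")
      (auto simp: short_paths_iff intro: is_path_cat)
  then show "(arrow_der a e :: (('v, 'a) path \<Rightarrow> 'k) \<Rightarrow> _) (mul (path_elem p) (path_elem q)) =
      mul (arrow_der a e (path_elem p)) (path_elem q) + mul (path_elem p) (arrow_der a e (path_elem q))"
  proof cases
    case not_composable
    then show ?thesis
      using p q by (simp add: mul_path_elem arrow_der_path_elem arrow_subst_not_composable
          lin_endo_zero[OF lin_endo_arrow_der])
  next
    case short
    then show ?thesis
      using p q by (simp add: mul_path_elem arrow_der_path_elem arrow_subst_cat)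
  next
    case long
    then have "path_cat p q \<notin> B" by (simp add: short_paths_iff)
    with long show ?thesis
      using p q e by (simp add: mul_path_elem arrow_der_path_elem arrow_subst_long path_elem_not_short
          lin_endo_zero[OF lin_endo_arrow_der])
  qed
qed

abbreviation "Par \<equiv> parallel_pairs V A s t m"

lemma parallel_pairs_iff: "(a, e) \<in> Par \<longleftrightarrow> a \<in> A \<and> e \<in> B \<and> fst e = s a \<and> tgt e = t a"
  by (simp add: parallel_pairs_def path_src_def)

lemma finite_parallel_pairs: "finite Par"
  by (rule finite_subset[of _ "A \<times> B"]) (auto simp: parallel_pairs_def finite_A finite_short_paths)

lemma arrow_der_sum_vertex:
  fixes c :: "'a \<times> ('v, 'a) path \<Rightarrow> 'k::field"
  shows "w \<in> V \<Longrightarrow> (\<Sum>ae\<in>Par. map_scale (c ae) (arrow_der (fst ae) (snd ae))) (vertex_elem w) = 0"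
  by (simp add: sum_apply map_scale_apply arrow_der_vertex)

lemma arrow_der_sum_arrow:
  fixes c :: "'a \<times> ('v, 'a) path \<Rightarrow> 'k::field"
  assumes b: "b \<in> A"
  shows "(\<Sum>ae\<in>Par. map_scale (c ae) (arrow_der (fst ae) (snd ae))) (arrow_elem b) =
    (\<lambda>r. if (b, r) \<in> Par then c (b, r) else 0)"
proof (rule ext)
  fix r
  have "(\<Sum>ae\<in>Par. map_scale (c ae) (arrow_der (fst ae) (snd ae))) (arrow_elem b) r =
      (\<Sum>ae\<in>Par. if ae = (b, r) then c ae else 0)"
    unfolding sum_apply map_scale_apply kscale_apply
  proof (intro sum.cong refl)
    fix ae assume ae: "ae \<in> Par"
    then obtain a e where ae_eq: "ae = (a, e)" and "a \<in> A" "e \<in> B" "fst e = s a" "tgt e = t a"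
      by (cases ae) (auto simp: parallel_pairs_iff)
    then have "(arrow_der a e (arrow_elem b) :: _ \<Rightarrow> 'k) = (if b = a then path_elem e else 0)"
      using b by (simp add: arrow_der_arrow)
    then show "c ae * arrow_der (fst ae) (snd ae) (arrow_elem b) r = (if ae = (b, r) then c ae else 0)"
      using \<open>e \<in> B\<close> by (auto simp: ae_eq path_elem_def)
  qed
  then show "(\<Sum>ae\<in>Par. map_scale (c ae) (arrow_der (fst ae) (snd ae))) (arrow_elem b) r =
      (if (b, r) \<in> Par then c (b, r) else 0)"
    using finite_parallel_pairs by simp
qed

lemma derivation_eq_0I:
  assumes D: "D \<in> Der" and vertices: "\<And>v. v \<in> V \<Longrightarrow> D (vertex_elem v) = 0"
    and arrows: "\<And>b. b \<in> A \<Longrightarrow> D (arrow_elem b) = 0"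
  shows "D = 0"
proof (rule lin_endo_eq_0I)
  show "lin_endo D" using D by (simp add: derivations_iff)
  have "D (path_elem r) = 0" if "r \<in> B" and "path_len r = n" for r n
    using that
  proof (induction n arbitrary: r)
    case 0
    then show ?case using vertices short_path_src short_path_trivial by metis
  next
    case (Suc k)
    define b where "b = snd r ! k"
    have "drop k (snd r) = [b]"
      using Suc.prems(2) Cons_nth_drop_Suc[of k "snd r"] by (simp add: b_def path_len_def)
    then have last_arrow: "path_suffix t r k = (tgt (path_prefix r k), [b])"
      by (simp add: path_suffix_def)
    then have b: "b \<in> A" "s b = tgt (path_prefix r k)"
      using short_path_suffix[OF Suc.prems(1), of k] by (auto simp: short_paths_iff is_path_iff_walk)
    have "path_len (path_prefix r k) = k"
      using Suc.prems(2) by (simp add: path_prefix_def path_len_def)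
    then have prefix: "D (path_elem (path_prefix r k)) = 0"
      by (rule Suc.IH[OF short_path_prefix[OF Suc.prems(1)]])
    have "path_elem r = mul (path_elem (path_prefix r k)) (arrow_elem b)"
      using path_cat_prefix_suffix[of r k t] last_arrow b(2) by (simp add: mul_path_elem)
    then have "D (path_elem r) = D (mul (path_elem (path_prefix r k)) (arrow_elem b))"
      by (rule arg_cong)
    also have "\<dots> = mul (D (path_elem (path_prefix r k))) (arrow_elem b) +
        mul (path_elem (path_prefix r k)) (D (arrow_elem b))"
      by (rule derivation_Leibniz[OF D]) simp_all
    finally show ?case
      using prefix arrows[OF b(1)] by simp
  qed
  then show "D (path_elem r) = 0" if "r \<in> B" for r
    using that by blast
qed

lemma derivation_arrow_parallel:
  assumes D: "D \<in> Der" and vertices: "\<And>v. v \<in> V \<Longrightarrow> D (vertex_elem v) = 0" and b: "b \<in> A"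
    and nonzero: "D (arrow_elem b) r \<noteq> 0"
  shows "(b, r) \<in> Par"
proof -
  let ?y = "D (arrow_elem b)"
  have y: "?y \<in> \<Lambda>" using D by (simp add: derivations_iff lin_endoD(2))
  have sb: "s b \<in> V" and tb: "t b \<in> V" using quiver b by (auto simp: is_quiver_def)
  have "?y = D (mul (vertex_elem (s b)) (arrow_elem b))"
    by (simp add: mul_vertex_path_elem)
  also have "\<dots> = mul (vertex_elem (s b)) ?y"
    using derivation_Leibniz[OF D] vertices[OF sb] by simp
  finally have "fst r = s b"
    using nonzero by (simp add: mul_vertex_left[OF y]) (metis)
  have "?y = D (mul (arrow_elem b) (vertex_elem (t b)))"
    by (simp add: mul_path_elem_vertex path_tgt_def)
  also have "\<dots> = mul ?y (vertex_elem (t b))"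
    using derivation_Leibniz[OF D] vertices[OF tb] by simp
  finally have "tgt r = t b"
    using nonzero by (simp add: mul_vertex_right[OF y]) (metis)
  moreover have "r \<in> B"
    using nonzero carrier_vanishes[OF y] by blast
  ultimately show ?thesis
    using b \<open>fst r = s b\<close> by (simp add: parallel_pairs_iff)
qed

text \<open>The sum is the element from the standard proof that every derivation of the separable
  subalgebra spanned by the vertices is inner.\<close>

lemma ad_vertex_derivation_sum:
  assumes D: "(D :: (('v, 'a) path \<Rightarrow> 'k::field) \<Rightarrow> _) \<in> Der" and w: "w \<in> V"
  shows "ad (\<Sum>v\<in>V. mul (D (vertex_elem v)) (vertex_elem v)) (vertex_elem w) = D (vertex_elem w)"
proof -
  define e :: "'v \<Rightarrow> ('v, 'a) path \<Rightarrow> 'k" where "e v = vertex_elem v" for v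
  define d where "d v = D (e v)" for v
  define z where "z = (\<Sum>v\<in>V. mul (d v) (e v))"
  have lin: "lin_endo D" using D by (simp add: derivations_iff)
  have eL: "e v \<in> \<Lambda>" for v by (simp add: e_def)
  have dL: "d v \<in> \<Lambda>" for v using lin_endoD(2)[OF lin eL] by (simp add: d_def)
  have ee: "mul (e v) (e u) = (if v = u then e v else 0)" for v u
    by (simp add: e_def mul_vertex_path_elem)
  have Leibniz: "D (mul (e u) (e v)) = mul (d u) (e v) + mul (e u) (d v)" for u v
    using derivation_Leibniz[OF D eL eL] by (simp add: d_def)
  have "mul z (e w) = (\<Sum>v\<in>V. mul (d v) (mul (e v) (e w)))"
    by (simp add: z_def mul_sum_left mul_assoc dL eL)
  also have "\<dots> = mul (d w) (e w)"
    using w finite_V by (simp add: ee if_distrib cong: if_cong)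
  finally have right: "mul z (e w) = mul (d w) (e w)" .
  have "mul (mul (e w) (d v)) (e v) = (if v = w then 0 else - mul (d w) (e v))" for v
  proof (cases "v = w")
    case True
    have "mul (e w) (d w) = d w - mul (d w) (e w)"
      using Leibniz[of w w] by (simp add: ee d_def algebra_simps)
    then show ?thesis
      using True by (simp add: mul_diff_left mul_assoc dL eL ee)
  next
    case False
    have "mul (e w) (d v) = - mul (d w) (e v)"
      using Leibniz[of w v] False lin_endo_zero[OF lin] by (simp add: ee eq_neg_iff_add_eq_0 add.commute)
    then show ?thesis
      using False by (simp add: mul_uminus_left mul_assoc dL eL ee)
  qed
  then have "mul (e w) z = (\<Sum>v\<in>V. (if v = w then mul (d w) (e v) else 0) - mul (d w) (e v))"
    by (simp add: z_def mul_sum_right mul_assoc[symmetric] dL eL) (intro sum.cong refl, simp)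
  also have "\<dots> = mul (d w) (e w) - mul (d w) one_elem"
    using w finite_V by (simp add: sum_subtractf one_elem_def mul_sum_right e_def)
  finally have left: "mul (e w) z = mul (d w) (e w) - d w"
    by (simp add: mul_one_right dL)
  have "ad z (e w) = d w"
    using eL[of w] by (simp add: ad_def right left)
  then show ?thesis by (simp add: z_def d_def e_def)
qed

lemma inner_derivation_agreeing_on_vertices:
  assumes D: "(D :: (('v, 'a) path \<Rightarrow> 'k::field) \<Rightarrow> _) \<in> Der"
  obtains c where "\<And>w. w \<in> V \<Longrightarrow>
    ad (\<Sum>p\<in>positive_paths. kscale (c p) (path_elem p)) (vertex_elem w) = D (vertex_elem w)"
proof -
  define z :: "('v, 'a) path \<Rightarrow> 'k" where "z = (\<Sum>v\<in>V. mul (D (vertex_elem v)) (vertex_elem v))"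
  define z_pos where "z_pos = (\<Sum>p\<in>positive_paths. kscale (z p) (path_elem p))"
  have "z = (\<Sum>p\<in>B. kscale (z p) (path_elem p))"
    by (rule carrier_expansion) (simp add: z_def)
  also have "\<dots> = z_pos + (\<Sum>v\<in>V. kscale (z (v, [])) (vertex_elem v))"
    unfolding z_pos_def by (rule sum_short_paths_split)
  finally have "z_pos + (\<Sum>v\<in>V. kscale (z (v, [])) (vertex_elem v)) = z"
    by (rule sym)
  then have "z_pos = z - (\<Sum>v\<in>V. kscale (z (v, [])) (vertex_elem v))"
    by (simp add: eq_diff_eq)
  then have "ad z_pos (vertex_elem w) = D (vertex_elem w)" if "w \<in> V" for w
    using ad_vertex_derivation_sum[OF D that] ad_vertex_combination_at_vertex
    by (simp add: ad_diff z_def)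
  then show ?thesis
    using that[of z] by (simp add: z_pos_def)
qed

end

section \<open>Bases of the derivations and of the inner derivations\<close>

locale acyclic_truncated_path_algebra = truncated_path_algebra V A s t m
  for V :: "'v set" and A :: "'a set" and s t :: "'a \<Rightarrow> 'v" and m :: nat +
  assumes acyclic: "acyclic_quiver V A s t"
begin

lemma positive_path_not_closed: "p \<in> positive_paths \<Longrightarrow> fst p \<noteq> tgt p"
  using acyclic unfolding acyclic_quiver_def positive_paths_def short_paths_iff path_src_def by blast

lemma coeff_vanishes_if_ad_vertices_vanish:
  assumes z: "z \<in> \<Lambda>" and vertices: "\<And>w. w \<in> V \<Longrightarrow> ad z (vertex_elem w) = 0"
    and p: "p \<in> positive_paths"
  shows "z p = 0"
proof -
  have "tgt p \<in> V" using p by (simp add: positive_paths_def short_path_tgt)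
  then have "ad z (vertex_elem (tgt p)) p = 0" using vertices by simp
  then show ?thesis using positive_path_not_closed[OF p] by (simp add: ad_vertex[OF z])
qed

lemma parallel_pair_nontrivial:
  assumes "(a, e) \<in> Par"
  shows "snd e \<noteq> []"
proof
  assume "snd e = []"
  with assms have "(s a, [a]) \<in> positive_paths" and "s a = t a"
    using arrow_short_path by (auto simp: parallel_pairs_iff positive_paths_def path_len_def path_tgt_def)
  then show False using positive_path_not_closed by (fastforce simp: path_tgt_def)
qed

lemma arrow_der_parallel_in_derivations:
  "(a, e) \<in> Par \<Longrightarrow> (arrow_der a e :: (('v, 'a) path \<Rightarrow> 'k::field) \<Rightarrow> _) \<in> Der"
  by (intro arrow_der_in_derivations parallel_pair_nontrivial)

definition der_basis :: "('a \<times> ('v, 'a) path) + ('v, 'a) path \<Rightarrow>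
    ((('v, 'a) path \<Rightarrow> 'k::field) \<Rightarrow> (('v, 'a) path \<Rightarrow> 'k))" where
  "der_basis i = (case i of Inl ae \<Rightarrow> arrow_der (fst ae) (snd ae) | Inr p \<Rightarrow> ad (path_elem p))"

lemma der_basis_in_derivations:
  assumes "i \<in> Par <+> positive_paths"
  shows "(der_basis i :: (('v, 'a) path \<Rightarrow> 'k::field) \<Rightarrow> _) \<in> Der"
proof (cases i)
  case (Inl ae)
  then show ?thesis
    using assms arrow_der_parallel_in_derivations[of "fst ae" "snd ae"] by (auto simp: der_basis_def)
next
  case (Inr p)
  then show ?thesis by (simp add: der_basis_def ad_in_derivations)
qed

lemma der_basis_independent:
  assumes zero: "(\<Sum>i\<in>Par <+> positive_paths. map_scale (c i) (der_basis i)) =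
    (0 :: (('v, 'a) path \<Rightarrow> 'k::field) \<Rightarrow> _)"
  shows "\<forall>i\<in>Par <+> positive_paths. c i = 0"
proof -
  define E :: "(('v, 'a) path \<Rightarrow> 'k) \<Rightarrow> _" where
    "E = (\<Sum>ae\<in>Par. map_scale (c (Inl ae)) (arrow_der (fst ae) (snd ae)))"
  define z :: "('v, 'a) path \<Rightarrow> 'k" where "z = (\<Sum>p\<in>positive_paths. kscale (c (Inr p)) (path_elem p))"
  have "(\<Sum>i\<in>Par <+> positive_paths. map_scale (c i) (der_basis i)) = E + ad z"
    by (simp add: sum.Plus finite_parallel_pairs finite_positive_paths der_basis_def E_def z_def
        ad_sum ad_kscale)
  with zero have E_ad: "E + ad z = 0" by simp
  have "ad z (vertex_elem w) = 0" if "w \<in> V" for w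
    using fun_cong[OF E_ad, of "vertex_elem w"] arrow_der_sum_vertex[OF that, where c = "\<lambda>ae. c (Inl ae)"]
    by (simp add: E_def)
  then have "z p = 0" if "p \<in> positive_paths" for p
    using that by (intro coeff_vanishes_if_ad_vertices_vanish) (simp_all add: z_def)
  then have paths: "c (Inr p) = 0" if "p \<in> positive_paths" for p
    using that sum_path_elem_apply[of positive_paths "\<lambda>p. c (Inr p)" p]
    by (simp add: z_def positive_paths_def)
  then have "z = 0"
    unfolding z_def by (intro sum.neutral) simp
  then have E: "E = 0"
    using E_ad by (simp only: ad_zero add_0_right)
  have pairs: "c (Inl (b, e)) = 0" if "(b, e) \<in> Par" for b e
  proof -
    have "E (arrow_elem b) = (\<lambda>r. if (b, r) \<in> Par then c (Inl (b, r)) else 0)"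
      unfolding E_def using that by (intro arrow_der_sum_arrow) (simp add: parallel_pairs_iff)
    then have "c (Inl (b, e)) = E (arrow_elem b) e"
      using that by simp
    then show ?thesis by (simp add: E)
  qed
  show ?thesis using paths pairs by auto
qed

lemma derivations_in_span_der_basis:
  assumes D: "(D :: (('v, 'a) path \<Rightarrow> 'k::field) \<Rightarrow> _) \<in> Der"
  shows "D \<in> map_space.span (der_basis ` (Par <+> positive_paths))"
proof -
  obtain c where ad_vertex_eq: "\<And>w. w \<in> V \<Longrightarrow>
      ad (\<Sum>p\<in>positive_paths. kscale (c p) (path_elem p)) (vertex_elem w) = D (vertex_elem w)"
    using inner_derivation_agreeing_on_vertices[OF D] by blast
  define z_pos :: "('v, 'a) path \<Rightarrow> 'k" where
    "z_pos = (\<Sum>p\<in>positive_paths. kscale (c p) (path_elem p))"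
  define D0 where "D0 = D - ad z_pos"
  have D0: "D0 \<in> Der"
    unfolding D0_def using D by (rule derivations_diff) (simp add: ad_in_derivations z_pos_def)
  have D0_vertex: "D0 (vertex_elem w) = 0" if "w \<in> V" for w
    using ad_vertex_eq[OF that] by (simp add: D0_def z_pos_def)
  define S where "S = (\<Sum>ae\<in>Par. map_scale (D0 (arrow_elem (fst ae)) (snd ae)) (arrow_der (fst ae) (snd ae)))"
  have "D0 - S = 0"
  proof (rule derivation_eq_0I)
    show "D0 - S \<in> Der"
      unfolding S_def using D0
      by (intro derivations_diff derivations_sum derivations_map_scale arrow_der_parallel_in_derivations)
        simp_all
    show "(D0 - S) (vertex_elem v) = 0" if "v \<in> V" for v
      using that by (simp add: D0_vertex S_def arrow_der_sum_vertex)
    show "(D0 - S) (arrow_elem b) = 0" if "b \<in> A" for b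
      using that derivation_arrow_parallel[OF D0 D0_vertex that]
      by (auto simp: S_def arrow_der_sum_arrow fun_eq_iff)
  qed
  then have "D = (\<Sum>p\<in>positive_paths. map_scale (c p) (der_basis (Inr p))) +
      (\<Sum>ae\<in>Par. map_scale (D0 (arrow_elem (fst ae)) (snd ae)) (der_basis (Inl ae)))"
    by (simp add: D0_def S_def z_pos_def der_basis_def ad_sum ad_kscale algebra_simps)
  also have "\<dots> \<in> map_space.span (der_basis ` (Par <+> positive_paths))"
    by (intro map_space.span_add map_space.span_sum map_space.span_scale map_space.span_base) auto
  finally show ?thesis .
qed

lemma dim_derivations:
  "map_space.dim (Der :: ((('v, 'a) path \<Rightarrow> 'k::field) \<Rightarrow> _) set) = card Par + card positive_paths"
proof -
  have "map_space.dim (Der :: ((('v, 'a) path \<Rightarrow> 'k) \<Rightarrow> _) set) = card (Par <+> positive_paths)"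
  proof (rule map_space.dim_eq_card_of_basis_family)
    show "finite (Par <+> positive_paths)"
      using finite_parallel_pairs finite_positive_paths by simp
    show "\<forall>i\<in>Par <+> positive_paths. c i = 0"
      if "(\<Sum>i\<in>Par <+> positive_paths. map_scale (c i) (der_basis i)) = (0 :: (('v, 'a) path \<Rightarrow> 'k) \<Rightarrow> _)"
      for c
      using that by (rule der_basis_independent)
    show "der_basis ` (Par <+> positive_paths) \<subseteq> (Der :: ((('v, 'a) path \<Rightarrow> 'k) \<Rightarrow> _) set)"
      using der_basis_in_derivations by blast
    show "(Der :: ((('v, 'a) path \<Rightarrow> 'k) \<Rightarrow> _) set) \<subseteq> map_space.span (der_basis ` (Par <+> positive_paths))"
      using derivations_in_span_der_basis by blast
  qed
  then show ?thesis
    using finite_parallel_pairs finite_positive_paths by (simp add: card_Plus)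
qed

text \<open>The vertex v0 is left out because the ad of all vertices add up to ad 1 = 0.\<close>

definition inner_basis :: "('v, 'a) path + 'v \<Rightarrow> ((('v, 'a) path \<Rightarrow> 'k::field) \<Rightarrow> (('v, 'a) path \<Rightarrow> 'k))" where
  "inner_basis i = (case i of Inl p \<Rightarrow> ad (path_elem p) | Inr v \<Rightarrow> ad (vertex_elem v))"

lemma inner_basis_independent:
  assumes conn: "connected_quiver V A s t" and v0: "v0 \<in> V"
    and zero: "(\<Sum>i\<in>positive_paths <+> (V - {v0}). map_scale (c i) (inner_basis i)) =
      (0 :: (('v, 'a) path \<Rightarrow> 'k::field) \<Rightarrow> _)"
  shows "\<forall>i\<in>positive_paths <+> (V - {v0}). c i = 0"
proof -
  define w :: "('v, 'a) path \<Rightarrow> 'k" where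
    "w = (\<Sum>p\<in>positive_paths. kscale (c (Inl p)) (path_elem p)) +
      (\<Sum>v\<in>V - {v0}. kscale (c (Inr v)) (vertex_elem v))"
  have w: "w \<in> \<Lambda>" by (simp add: w_def)
  have "(\<Sum>i\<in>positive_paths <+> (V - {v0}). map_scale (c i) (inner_basis i)) = ad w"
    using finite_positive_paths finite_V
    by (simp add: sum.Plus inner_basis_def w_def ad_add ad_sum ad_kscale)
  with zero have central: "ad w = 0" by simp
  have vertex_sum_at_path: "(\<Sum>v\<in>V - {v0}. kscale (c (Inr v)) (vertex_elem v)) p = (0 :: 'k)"
    if "p \<in> positive_paths" for p
    using that unfolding sum_apply
    by (intro sum.neutral) (auto simp: path_elem_def positive_paths_def path_len_def)
  have "c (Inl p) = 0" if p: "p \<in> positive_paths" for p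
  proof -
    have "w p = c (Inl p)"
      using p vertex_sum_at_path[OF p] sum_path_elem_apply[of positive_paths "\<lambda>p. c (Inl p)" p]
      by (simp add: w_def positive_paths_def)
    then show ?thesis
      using coeff_vanishes_if_ad_vertices_vanish[OF w _ p] central by simp
  qed
  moreover have "c (Inr u) = 0" if u: "u \<in> V - {v0}" for u
  proof -
    have w_vertex: "w (x, []) = (if x \<in> V - {v0} then c (Inr x) else 0)" for x
    proof -
      have "(\<Sum>v\<in>V - {v0}. kscale (c (Inr v)) (vertex_elem v)) (x, []) =
          (\<Sum>v\<in>V - {v0}. if v = x then c (Inr v) else 0)"
        unfolding sum_apply by (intro sum.cong refl) (auto simp: path_elem_def vertex_short_path)
      then show ?thesis
        using sum_path_elem_apply[of positive_paths "\<lambda>p. c (Inl p)" "(x, [])"] finite_V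
        by (simp add: w_def positive_paths_def path_len_def)
    qed
    show ?thesis
      using center_vertex_coeffs_eq[OF conn w central, of u v0] u v0 by (simp add: w_vertex)
  qed
  ultimately show ?thesis by auto
qed

lemma inner_derivations_in_span_inner_basis:
  assumes v0: "v0 \<in> V" and z: "(z :: ('v, 'a) path \<Rightarrow> 'k::field) \<in> \<Lambda>"
  shows "ad z \<in> map_space.span (inner_basis ` (positive_paths <+> (V - {v0})))"
proof -
  let ?span = "map_space.span (inner_basis ` (positive_paths <+> (V - {v0})) ::
    ((('v, 'a) path \<Rightarrow> 'k) \<Rightarrow> _) set)"
  have vertex: "ad (vertex_elem v) \<in> ?span" if v: "v \<in> V" for v
  proof (cases "v = v0")
    case False
    then have "ad (vertex_elem v) = inner_basis (Inr v)" by (simp add: inner_basis_def)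
    then show ?thesis using v False by (auto intro: map_space.span_base)
  next
    case True
    have "one_elem = vertex_elem v0 + (\<Sum>u\<in>V - {v0}. vertex_elem u)"
      unfolding one_elem_def using finite_V v0 by (rule sum.remove)
    then have "0 = ad (vertex_elem v0) + (\<Sum>u\<in>V - {v0}. ad (vertex_elem u))"
      by (metis ad_one ad_add ad_sum)
    then have "ad (vertex_elem v0) = - (\<Sum>u\<in>V - {v0}. inner_basis (Inr u))"
      by (simp add: inner_basis_def eq_neg_iff_add_eq_0)
    also have "\<dots> \<in> ?span"
      by (intro map_space.span_neg map_space.span_sum map_space.span_base) auto
    finally show ?thesis using True by simp
  qed
  have "z = (\<Sum>p\<in>B. kscale (z p) (path_elem p))" by (rule carrier_expansion[OF z])
  also have "\<dots> = (\<Sum>p\<in>positive_paths. kscale (z p) (path_elem p)) + (\<Sum>v\<in>V. kscale (z (v, [])) (vertex_elem v))"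
    by (rule sum_short_paths_split)
  finally have "ad z = ad ((\<Sum>p\<in>positive_paths. kscale (z p) (path_elem p)) +
      (\<Sum>v\<in>V. kscale (z (v, [])) (vertex_elem v)))"
    by (rule arg_cong)
  also have "\<dots> = (\<Sum>p\<in>positive_paths. map_scale (z p) (inner_basis (Inl p))) +
      (\<Sum>v\<in>V. map_scale (z (v, [])) (ad (vertex_elem v)))"
    by (simp add: ad_add ad_sum ad_kscale inner_basis_def)
  also have "\<dots> \<in> ?span"
    by (intro map_space.span_add map_space.span_sum map_space.span_scale vertex)
      (auto intro: map_space.span_base)
  finally show ?thesis .
qed

lemma dim_inner_derivations:
  assumes conn: "connected_quiver V A s t" and v0: "v0 \<in> V"
  shows "map_space.dim (inner_derivations V A s t m :: ((('v, 'a) path \<Rightarrow> 'k::field) \<Rightarrow> _) set) =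
    card positive_paths + (card V - 1)"
proof -
  have "map_space.dim (ad ` \<Lambda> :: ((('v, 'a) path \<Rightarrow> 'k) \<Rightarrow> _) set) = card (positive_paths <+> (V - {v0}))"
  proof (rule map_space.dim_eq_card_of_basis_family)
    show "finite (positive_paths <+> (V - {v0}))"
      using finite_positive_paths finite_V by simp
    show "\<forall>i\<in>positive_paths <+> (V - {v0}). c i = 0"
      if "(\<Sum>i\<in>positive_paths <+> (V - {v0}). map_scale (c i) (inner_basis i)) =
        (0 :: (('v, 'a) path \<Rightarrow> 'k) \<Rightarrow> _)" for c
      using conn v0 that by (rule inner_basis_independent)
    show "inner_basis ` (positive_paths <+> (V - {v0})) \<subseteq> (ad ` \<Lambda> :: ((('v, 'a) path \<Rightarrow> 'k) \<Rightarrow> _) set)"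
      by (auto simp: inner_basis_def)
    show "(ad ` \<Lambda> :: ((('v, 'a) path \<Rightarrow> 'k) \<Rightarrow> _) set) \<subseteq>
        map_space.span (inner_basis ` (positive_paths <+> (V - {v0})))"
      using inner_derivations_in_span_inner_basis[OF v0] by blast
  qed
  then show ?thesis
    using finite_positive_paths finite_V v0 by (simp add: card_Plus inner_derivations_eq)
qed

end

theorem theorem6p1:
  fixes V :: "'v set" and A :: "'a set" and s t :: "'a \<Rightarrow> 'v" and m :: nat
  assumes "is_quiver V A s t"
    and "finite_quiver V A"
    and "connected_quiver V A s t"
    and "acyclic_quiver V A s t"
    and "m \<ge> 2"
  shows "HH1_dim V A s t m TYPE('k::field) =
           1 - int (card V) + int (card (parallel_pairs V A s t m))"
proof -
  interpret acyclic_truncated_path_algebra V A s t m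
    using assms by unfold_locales (auto simp: finite_quiver_def)
  obtain v0 where v0: "v0 \<in> V"
    using assms(3) by (auto simp: connected_quiver_def)
  then have "1 \<le> card V"
    using finite_V by (auto simp: Suc_le_eq card_gt_0_iff)
  then show ?thesis
    unfolding HH1_dim_def kdim_def
    using dim_derivations[where 'k = 'k] dim_inner_derivations[OF assms(3) v0, where 'k = 'k] by simp
qed

end
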